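(* Let $X$ be a definable set in the ordered Fraenkel–Mostowski model $\mathbf{ZFA}(\mathcal{Q})$ of set theory with atoms. Then its Stone–Čech compactification $\overline{X}$ is definable.
   Context: $\mathcal{Q}=\langle\mathbb{Q},\le\rangle$ is the rationals with their natural order. $\mathbf{ZFA}(\mathcal{Q})$ is the permutation model with atoms $\mathbb{Q}$ consisting of hereditarily finitely supported sets (supported by finite $A_0$ = fixed by all order-automorphisms fixing $A_0$ pointwise). A set is definable if for some finite $A_0$ it is supported by $A_0$ and has finitely many orbits under automorphisms fixing $A_0$ pointwise. $\overline{X}$ is the set of finitely supported ultrafilters on the Boolean algebra of finitely supported subsets of $X$. *)

theory Defs
  imports Complex_Main
begin

definition qaut :: "(rat \<Rightarrow> rat) set" where
  "qaut = {\<pi>. bij \<pi> \<and> (\<forall>x y. x \<le> y \<longleftrightarrow> \<pi> x \<le> \<pi> y)}"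

definition is_qaction :: "((rat \<Rightarrow> rat) \<Rightarrow> 'x \<Rightarrow> 'x) \<Rightarrow> bool" where
  "is_qaction act \<longleftrightarrow> act id = id \<and>
     (\<forall>\<pi>\<in>qaut. \<forall>\<sigma>\<in>qaut. act (\<pi> \<circ> \<sigma>) = act \<pi> \<circ> act \<sigma>)"

definition fixing :: "rat set \<Rightarrow> (rat \<Rightarrow> rat) set" where
  "fixing A = {\<pi>\<in>qaut. \<forall>a\<in>A. \<pi> a = a}"

definition supports :: "((rat \<Rightarrow> rat) \<Rightarrow> 'x \<Rightarrow> 'x) \<Rightarrow> rat set \<Rightarrow> 'x \<Rightarrow> bool" where
  "supports act A x \<longleftrightarrow> (\<forall>\<pi>\<in>fixing A. act \<pi> x = x)"

definition fin_supp :: "((rat \<Rightarrow> rat) \<Rightarrow> 'x \<Rightarrow> 'x) \<Rightarrow> 'x \<Rightarrow> bool" where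
  "fin_supp act x \<longleftrightarrow> (\<exists>A. finite A \<and> supports act A x)"

definition set_act :: "((rat \<Rightarrow> rat) \<Rightarrow> 'x \<Rightarrow> 'x) \<Rightarrow> (rat \<Rightarrow> rat) \<Rightarrow> 'x set \<Rightarrow> 'x set" where
  "set_act act \<pi> S = act \<pi> ` S"

definition orbit :: "((rat \<Rightarrow> rat) \<Rightarrow> 'x \<Rightarrow> 'x) \<Rightarrow> rat set \<Rightarrow> 'x \<Rightarrow> 'x set" where
  "orbit act A x = {act \<pi> x | \<pi>. \<pi> \<in> fixing A}"

(* X is a definable set (in the sense of ZFA(Q)): supported by a finite A,
   all its elements finitely supported (so X is a set of the model), and
   finitely many orbits under automorphisms fixing A pointwise *)
definition definable :: "((rat \<Rightarrow> rat) \<Rightarrow> 'x \<Rightarrow> 'x) \<Rightarrow> 'x set \<Rightarrow> bool" where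
  "definable act X \<longleftrightarrow> (\<exists>A. finite A \<and> supports (set_act act) A X \<and>
      (\<forall>x\<in>X. fin_supp act x) \<and> finite (orbit act A ` X))"

definition fs_subsets :: "((rat \<Rightarrow> rat) \<Rightarrow> 'x \<Rightarrow> 'x) \<Rightarrow> 'x set \<Rightarrow> 'x set set" where
  "fs_subsets act X = {S. S \<subseteq> X \<and> fin_supp (set_act act) S}"

definition is_ultrafilter_on :: "'x set \<Rightarrow> 'x set set \<Rightarrow> 'x set set \<Rightarrow> bool" where
  "is_ultrafilter_on X B U \<longleftrightarrow> U \<subseteq> B \<and> X \<in> U \<and> {} \<notin> U \<and>
     (\<forall>S\<in>U. \<forall>T\<in>B. S \<subseteq> T \<longrightarrow> T \<in> U) \<and>
     (\<forall>S\<in>U. \<forall>T\<in>U. S \<inter> T \<in> U) \<and>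
     (\<forall>S\<in>B. S \<in> U \<or> X - S \<in> U)"

(* Stone-Cech compactification: finitely supported ultrafilters *)
definition stone :: "((rat \<Rightarrow> rat) \<Rightarrow> 'x \<Rightarrow> 'x) \<Rightarrow> 'x set \<Rightarrow> 'x set set set" where
  "stone act X = {U. is_ultrafilter_on X (fs_subsets act X) U \<and>
                     fin_supp (set_act (set_act act)) U}"

end

theory Submission
  imports Defs
begin

text \<open>
  A finitely supported element \<open>x\<close> has a least support: if \<open>C\<close> and \<open>D\<close> support \<open>x\<close> and
  \<open>a \<in> C - D\<close>, then \<open>a\<close> can be moved within its gap relative to \<open>(C - {a}) \<union> D\<close>, and every
  automorphism fixing \<open>C - {a}\<close> factors through automorphisms fixing \<open>C\<close> and fixing the
  moved copy of \<open>C\<close>. The elements of the least support, in increasing order, are the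
  coordinates of \<open>x\<close>.

  An ultrafilter \<open>U\<close> in the Stone compactification of \<open>X\<close> is determined by the orbits of \<open>X\<close>
  it contains and by its profile: for each \<open>j\<close>, the rationals \<open>q\<close> such that \<open>U\<close> contains
  the set of points whose \<open>j\<close>-th coordinate is greater than (resp. equal to) \<open>q\<close>. Indeed, a
  finitely supported \<open>S \<in> U\<close> contains a member of \<open>U\<close> on which all points are conjugate over
  a support of \<open>S\<close>, namely the set of points of an orbit in \<open>U\<close> whose coordinates lie on the
  side of each element of that support prescribed by the profile. Since \<open>U\<close> is finitely
  supported, the profile consists of invariant lower cuts and of empty or one-point sets, so it
  is described by finitely many shapes and finitely many rational endpoints. Coordinates are
  bounded in number on \<open>X\<close>, so up to an automorphism fixing the support \<open>A\<close> of \<open>X\<close> (which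
  only sees the order type of the endpoints over \<open>A\<close>) there are finitely many such data.
\<close>

section \<open>Order automorphisms of \<open>\<rat>\<close>\<close>

lemma qaut_le_iff [simp]: "\<pi> \<in> qaut \<Longrightarrow> \<pi> x \<le> \<pi> y \<longleftrightarrow> x \<le> y"
  unfolding qaut_def by blast

lemma qaut_less_iff [simp]: "\<pi> \<in> qaut \<Longrightarrow> \<pi> x < \<pi> y \<longleftrightarrow> x < y"
  by (simp add: less_le_not_le)

lemma qaut_eq_iff [simp]: "\<pi> \<in> qaut \<Longrightarrow> \<pi> x = \<pi> y \<longleftrightarrow> x = y"
  by (metis order_antisym order_refl qaut_le_iff)

lemma qaut_bij: "\<pi> \<in> qaut \<Longrightarrow> bij \<pi>"
  unfolding qaut_def by blast

lemma qautI:
  fixes \<pi> :: "rat \<Rightarrow> rat"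
  assumes "strict_mono \<pi>" and "surj \<pi>"
  shows "\<pi> \<in> qaut"
  using assms strict_mono_imp_inj_on strict_mono_less_eq unfolding qaut_def bij_def by blast

lemma qaut_id [simp]: "id \<in> qaut"
  unfolding qaut_def by simp

lemma qaut_comp: "\<pi> \<in> qaut \<Longrightarrow> \<sigma> \<in> qaut \<Longrightarrow> \<pi> \<circ> \<sigma> \<in> qaut"
  unfolding qaut_def using bij_comp by fastforce

lemma qaut_inv_f_f [simp]: "\<pi> \<in> qaut \<Longrightarrow> inv \<pi> (\<pi> x) = x"
  by (simp add: bij_is_inj qaut_bij)

lemma qaut_f_inv_f [simp]: "\<pi> \<in> qaut \<Longrightarrow> \<pi> (inv \<pi> x) = x"
  by (simp add: bij_is_surj qaut_bij surj_f_inv_f)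

lemma qaut_inv:
  assumes "\<pi> \<in> qaut"
  shows "inv \<pi> \<in> qaut"
proof -
  have "x \<le> y \<longleftrightarrow> inv \<pi> x \<le> inv \<pi> y" for x y
    using qaut_le_iff[OF assms, of "inv \<pi> x" "inv \<pi> y"] assms by simp
  then show ?thesis
    using assms bij_imp_bij_inv qaut_bij unfolding qaut_def by blast
qed

lemma qaut_image_iff:
  assumes "\<pi> \<in> qaut"
  shows "q \<in> \<pi> ` S \<longleftrightarrow> inv \<pi> q \<in> S"
proof
  show "inv \<pi> q \<in> S" if "q \<in> \<pi> ` S"
    using that assms by auto
  show "q \<in> \<pi> ` S" if "inv \<pi> q \<in> S"
    using imageI[OF that, of \<pi>] assms by simp
qed

lemma fixing_qaut: "\<pi> \<in> fixing A \<Longrightarrow> \<pi> \<in> qaut"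
  by (simp add: fixing_def)

lemma fixing_id [simp]: "id \<in> fixing A"
  by (simp add: fixing_def)

lemma fixing_comp: "\<pi> \<in> fixing A \<Longrightarrow> \<sigma> \<in> fixing A \<Longrightarrow> \<pi> \<circ> \<sigma> \<in> fixing A"
  by (simp add: fixing_def qaut_comp)

lemma fixing_inv:
  assumes "\<pi> \<in> fixing A"
  shows "inv \<pi> \<in> fixing A"
proof -
  have \<pi>: "\<pi> \<in> qaut" "\<And>a. a \<in> A \<Longrightarrow> \<pi> a = a"
    using assms by (auto simp: fixing_def)
  have "inv \<pi> a = a" if "a \<in> A" for a
    using qaut_inv_f_f[OF \<pi>(1), of a] \<pi>(2)[OF that] by simp
  then show ?thesis
    using qaut_inv[OF \<pi>(1)] by (simp add: fixing_def)
qed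

lemma fixing_antimono: "A \<subseteq> B \<Longrightarrow> fixing B \<subseteq> fixing A"
  by (auto simp: fixing_def)

lemma fixing_insert_iff: "\<pi> \<in> fixing (insert a A) \<longleftrightarrow> \<pi> \<in> fixing A \<and> \<pi> a = a"
  by (auto simp: fixing_def)

lemma qaut_move_above:
  fixes u p q :: rat
  assumes "u < p" "u < q"
  obtains \<pi> where "\<pi> \<in> qaut" "\<And>t. t \<le> u \<Longrightarrow> \<pi> t = t" "\<pi> p = q"
proof -
  define k where "k = (q - u) / (p - u)"
  have k: "k > 0" using assms by (simp add: k_def)
  define \<pi> where "\<pi> t = (if t \<le> u then t else u + (t - u) * k)" for t
  have "strict_mono \<pi>"
  proof (rule strict_monoI)
    fix x y :: rat assume "x < y"
    show "\<pi> x < \<pi> y"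
    proof (cases "y \<le> u")
      case True
      then show ?thesis using \<open>x < y\<close> by (simp add: \<pi>_def)
    next
      case False
      then have \<pi>y: "\<pi> y = u + (y - u) * k" by (simp add: \<pi>_def)
      have "\<pi> x = x \<and> x \<le> u \<or> \<pi> x = u + (x - u) * k" by (simp add: \<pi>_def)
      moreover have "(x - u) * k < (y - u) * k" "0 < (y - u) * k"
        using \<open>x < y\<close> False k by simp_all
      ultimately show ?thesis using \<pi>y by linarith
    qed
  qed
  moreover have "\<pi> (if t \<le> u then t else u + (t - u) / k) = t" for t
    using k by (simp add: \<pi>_def not_le)
  then have "surj \<pi>" by (rule surjI)
  ultimately have "\<pi> \<in> qaut" by (rule qautI)
  moreover have "\<pi> t = t" if "t \<le> u" for t using that by (simp add: \<pi>_def)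
  moreover have "\<pi> p = q" using assms by (simp add: \<pi>_def k_def)
  ultimately show thesis using that by blast
qed

lemma qaut_extend:
  fixes p :: "rat \<Rightarrow> rat"
  assumes "finite F" and "strict_mono_on F p"
  obtains \<pi> where "\<pi> \<in> qaut" "\<And>x. x \<in> F \<Longrightarrow> \<pi> x = p x"
proof -
  have "\<exists>\<pi>\<in>qaut. \<forall>x\<in>F. \<pi> x = p x"
    using assms
  proof (induction F rule: finite_linorder_max_induct)
    case empty
    show ?case using qaut_id by blast
  next
    case (insert b F)
    then obtain \<pi> where \<pi>: "\<pi> \<in> qaut" "\<forall>x\<in>F. \<pi> x = p x"
      by (meson monotone_on_subset subset_insertI)
    define u where "u = Max (insert (min (\<pi> b) (p b) - 1) (p ` F))"
    have below_b: "p a < \<pi> b" "p a < p b" if "a \<in> F" for a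
    proof -
      have "a < b" using insert.hyps(2) that by blast
      then show "p a < p b" using insert.prems that by (auto dest: strict_mono_onD)
      show "p a < \<pi> b" using \<open>a < b\<close> \<pi> that by (metis qaut_less_iff)
    qed
    have "u \<in> insert (min (\<pi> b) (p b) - 1) (p ` F)"
      unfolding u_def using insert.hyps(1) by (intro Max_in) auto
    then have u: "u < \<pi> b" "u < p b"
      using below_b by auto
    have "p a \<le> u" if "a \<in> F" for a
      unfolding u_def using insert.hyps(1) that by (intro Max_ge) auto
    moreover obtain \<sigma> where "\<sigma> \<in> qaut" "\<And>t. t \<le> u \<Longrightarrow> \<sigma> t = t" "\<sigma> (\<pi> b) = p b"
      using qaut_move_above[OF u] by blast
    ultimately show ?case
      using \<pi> qaut_comp[of \<sigma> \<pi>] by (intro bexI[of _ "\<sigma> \<circ> \<pi>"]) auto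
  qed
  then show ?thesis using that by blast
qed

lemma qaut_extend_partial_iso:
  fixes G :: "(rat \<times> rat) set"
  assumes "finite G" and iso: "\<And>s s' t t'. (s, s') \<in> G \<Longrightarrow> (t, t') \<in> G \<Longrightarrow> s < t \<longleftrightarrow> s' < t'"
  obtains \<pi> where "\<pi> \<in> qaut" "\<And>s s'. (s, s') \<in> G \<Longrightarrow> \<pi> s = s'"
proof -
  define p where "p s = (SOME s'. (s, s') \<in> G)" for s
  have p: "(s, p s) \<in> G" if "(s, s') \<in> G" for s s'
    unfolding p_def using that by (rule someI)
  have "strict_mono_on (Domain G) p"
  proof (rule strict_mono_onI)
    fix s t assume "s \<in> Domain G" "t \<in> Domain G" "s < t"
    then obtain s' t' where "(s, s') \<in> G" "(t, t') \<in> G" by blast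
    then show "p s < p t" using iso[OF p p] \<open>s < t\<close> by blast
  qed
  then obtain \<pi> where \<pi>: "\<pi> \<in> qaut" "\<And>s. s \<in> Domain G \<Longrightarrow> \<pi> s = p s"
    using qaut_extend assms(1) finite_Domain by blast
  have "\<pi> s = s'" if "(s, s') \<in> G" for s s'
  proof -
    have "\<not> s' < p s" "\<not> p s < s'"
      using iso[OF that p[OF that]] iso[OF p[OF that] that] by simp_all
    moreover have "\<pi> s = p s"
      using \<pi>(2) that by blast
    ultimately show ?thesis by simp
  qed
  then show ?thesis using that \<pi>(1) by blast
qed

lemma fixing_extend:
  fixes P P' :: "'i \<Rightarrow> rat"
  assumes "finite A" "finite I"
    and "\<And>i k. i \<in> I \<Longrightarrow> k \<in> I \<Longrightarrow> P i < P k \<longleftrightarrow> P' i < P' k"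
    and "\<And>i a. i \<in> I \<Longrightarrow> a \<in> A \<Longrightarrow> P i < a \<longleftrightarrow> P' i < a"
    and "\<And>i a. i \<in> I \<Longrightarrow> a \<in> A \<Longrightarrow> a < P i \<longleftrightarrow> a < P' i"
  obtains \<pi> where "\<pi> \<in> fixing A" "\<And>i. i \<in> I \<Longrightarrow> \<pi> (P i) = P' i"
proof -
  define G where "G = (\<lambda>a. (a, a)) ` A \<union> (\<lambda>i. (P i, P' i)) ` I"
  have G_cases: "(s \<in> A \<and> s' = s) \<or> (\<exists>i\<in>I. s = P i \<and> s' = P' i)" if "(s, s') \<in> G" for s s'
    using that by (auto simp: G_def)
  have "s < t \<longleftrightarrow> s' < t'" if "(s, s') \<in> G" "(t, t') \<in> G" for s s' t t'
    using G_cases[OF that(1)] G_cases[OF that(2)]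
    by (elim disjE bexE conjE) (use assms(3-5) in blast)+
  moreover have "finite G" using assms(1,2) by (simp add: G_def)
  ultimately obtain \<pi> where \<pi>: "\<pi> \<in> qaut" "\<And>s s'. (s, s') \<in> G \<Longrightarrow> \<pi> s = s'"
    using qaut_extend_partial_iso by blast
  have "\<pi> \<in> fixing A"
    using \<pi> unfolding fixing_def G_def by blast
  moreover have "\<pi> (P i) = P' i" if "i \<in> I" for i
    using \<pi>(2) that unfolding G_def by blast
  ultimately show ?thesis using that by blast
qed

lemma fixing_move_point:
  fixes K :: "rat set"
  assumes "finite K" "t \<notin> K" "t' \<notin> K" "\<And>k. k \<in> K \<Longrightarrow> k < t \<longleftrightarrow> k < t'"
  obtains \<rho> where "\<rho> \<in> fixing K" "\<rho> t = t'"
proof -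
  have "t < k \<longleftrightarrow> t' < k" if "k \<in> K" for k
    using assms(2-4) that by (metis linorder_neqE order_less_asym)
  then show ?thesis
    using fixing_extend[of K "{()}" "\<lambda>_. t" "\<lambda>_. t'"] assms that by auto
qed

lemma finite_gap:
  fixes F :: "rat set"
  assumes "finite F" "a \<notin> F"
  obtains l u where "l < a" "a < u" "\<And>f. f \<in> F \<Longrightarrow> f \<le> l \<or> u \<le> f"
proof
  let ?L = "insert (a - 1) {f \<in> F. f < a}" and ?U = "insert (a + 1) {f \<in> F. a < f}"
  show "Max ?L < a" "a < Min ?U"
    using assms(1) by (subst Max_less_iff Min_gr_iff; auto)+
  show "f \<le> Max ?L \<or> Min ?U \<le> f" if "f \<in> F" for f
  proof (cases "f < a")
    case True
    then show ?thesis using assms(1) that by (simp add: Max_ge)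
  next
    case False
    then have "a < f" using assms(2) that by (metis linorder_neqE)
    then show ?thesis using assms(1) that by (simp add: Min_le)
  qed
qed

lemma sorted_list_of_set_qaut_image:
  assumes "\<pi> \<in> qaut" "finite S"
  shows "sorted_list_of_set (\<pi> ` S) = map \<pi> (sorted_list_of_set S)"
proof (rule strict_sorted_equal)
  show "sorted_wrt (<) (map \<pi> (sorted_list_of_set S))"
    using assms(1) by (simp add: sorted_wrt_map)
qed (use assms(2) in simp_all)

lemma qaut_fixes_invariant_finite:
  assumes "\<pi> \<in> qaut" "finite C" "\<pi> ` C = C" "c \<in> C"
  shows "\<pi> c = c"
proof -
  have "map \<pi> (sorted_list_of_set C) = map id (sorted_list_of_set C)"
    using sorted_list_of_set_qaut_image[OF assms(1,2)] assms(3) by simp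
  then show ?thesis
    unfolding map_eq_conv using assms(2,4) by simp
qed

section \<open>Actions, least supports and coordinates\<close>

lemma qaction_comp:
  "is_qaction act \<Longrightarrow> \<pi> \<in> qaut \<Longrightarrow> \<sigma> \<in> qaut \<Longrightarrow> act \<pi> (act \<sigma> x) = act (\<pi> \<circ> \<sigma>) x"
  unfolding is_qaction_def by simp

lemma qaction_id: "is_qaction act \<Longrightarrow> act id x = x"
  unfolding is_qaction_def by simp

lemma qaction_inv_act [simp]:
  assumes "is_qaction act" "\<pi> \<in> qaut"
  shows "act (inv \<pi>) (act \<pi> x) = x"
proof -
  have "inv \<pi> \<circ> \<pi> = id" using assms(2) by (simp add: fun_eq_iff)
  then show ?thesis
    using qaction_comp[OF assms(1) qaut_inv[OF assms(2)] assms(2)] qaction_id[OF assms(1)] by simp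
qed

lemma qaction_act_inv [simp]:
  assumes "is_qaction act" "\<pi> \<in> qaut"
  shows "act \<pi> (act (inv \<pi>) x) = x"
proof -
  have "\<pi> \<circ> inv \<pi> = id" using assms(2) by (simp add: fun_eq_iff)
  then show ?thesis
    using qaction_comp[OF assms(1) assms(2) qaut_inv[OF assms(2)]] qaction_id[OF assms(1)] by simp
qed

lemma qaction_set_act: "is_qaction act \<Longrightarrow> is_qaction (set_act act)"
  unfolding is_qaction_def set_act_def by (simp add: fun_eq_iff image_comp)

lemma mem_set_act_iff:
  assumes "is_qaction act" "\<pi> \<in> qaut"
  shows "y \<in> set_act act \<pi> Y \<longleftrightarrow> act (inv \<pi>) y \<in> Y"
proof
  show "act (inv \<pi>) y \<in> Y" if "y \<in> set_act act \<pi> Y"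
    using that assms by (auto simp: set_act_def)
  show "y \<in> set_act act \<pi> Y" if "act (inv \<pi>) y \<in> Y"
    using imageI[OF that, of "act \<pi>"] assms by (simp add: set_act_def)
qed

lemma supportsD: "supports act C x \<Longrightarrow> \<pi> \<in> fixing C \<Longrightarrow> act \<pi> x = x"
  unfolding supports_def by blast

lemma supports_mono: "C \<subseteq> D \<Longrightarrow> supports act C x \<Longrightarrow> supports act D x"
  unfolding supports_def using fixing_antimono by blast

lemma supports_act:
  assumes act: "is_qaction act" and "\<pi> \<in> qaut" "supports act C x"
  shows "supports act (\<pi> ` C) (act \<pi> x)"
  unfolding supports_def
proof
  fix \<sigma> assume \<sigma>: "\<sigma> \<in> fixing (\<pi> ` C)"
  define \<tau> where "\<tau> = inv \<pi> \<circ> \<sigma> \<circ> \<pi>"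
  have \<sigma>q: "\<sigma> \<in> qaut" using \<sigma> by (rule fixing_qaut)
  have \<tau>q: "\<tau> \<in> qaut"
    unfolding \<tau>_def using assms(2) \<sigma>q qaut_inv qaut_comp by simp
  moreover have "\<tau> c = c" if "c \<in> C" for c
    using \<sigma> that assms(2) by (simp add: \<tau>_def fixing_def)
  ultimately have "\<tau> \<in> fixing C" by (simp add: fixing_def)
  have "\<sigma> \<circ> \<pi> = \<pi> \<circ> \<tau>"
    using assms(2) by (simp add: \<tau>_def fun_eq_iff)
  then have "act \<sigma> (act \<pi> x) = act \<pi> (act \<tau> x)"
    using qaction_comp[OF act \<sigma>q assms(2)] qaction_comp[OF act assms(2) \<tau>q] by simp
  also have "\<dots> = act \<pi> x"
    using supportsD[OF assms(3) \<open>\<tau> \<in> fixing C\<close>] by simp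
  finally show "act \<sigma> (act \<pi> x) = act \<pi> x" .
qed

lemma fin_supp_act:
  assumes "is_qaction act" "\<pi> \<in> qaut" "fin_supp act x"
  shows "fin_supp act (act \<pi> x)"
proof -
  obtain C where "finite C" "supports act C x"
    using assms(3) unfolding fin_supp_def by blast
  then show ?thesis
    unfolding fin_supp_def using supports_act[OF assms(1,2)] finite_imageI by blast
qed

lemma supports_replace_point:
  assumes act: "is_qaction act" and "finite F" "a \<in> C" "C - {a} \<subseteq> F" "a \<notin> F" "b \<notin> F"
    and "\<And>f. f \<in> F \<Longrightarrow> f < a \<longleftrightarrow> f < b"
    and "supports act C x" "supports act F x"
  shows "supports act (insert b (C - {a})) x"
proof -
  obtain \<rho> where \<rho>: "\<rho> \<in> fixing F" "\<rho> a = b"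
    using fixing_move_point assms(2,5-7) by metis
  have "\<rho> ` C = insert b (C - {a})"
    using \<rho> assms(3,4) unfolding fixing_def by force
  then show ?thesis
    using supports_act[OF act fixing_qaut[OF \<rho>(1)] assms(8)] supportsD[OF assms(9) \<rho>(1)] by simp
qed

lemma fixing_Diff_decompose:
  assumes "finite C" "a \<in> C" "\<pi> \<in> fixing (C - {a})" "b \<notin> C" "b \<noteq> \<pi> a" "\<pi> a < b \<longleftrightarrow> a < b"
  obtains \<tau> where "\<tau> \<in> fixing C" "\<pi> \<circ> inv \<tau> \<in> fixing (insert b (C - {a}))"
proof -
  have \<pi>q: "\<pi> \<in> qaut" and \<pi>C: "\<And>c. c \<in> C - {a} \<Longrightarrow> \<pi> c = c"
    using assms(3) by (auto simp: fixing_def)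
  define c where "c = inv \<pi> b"
  have \<pi>c: "\<pi> c = b" using \<pi>q by (simp add: c_def)
  have "c \<notin> C"
  proof
    assume "c \<in> C"
    moreover have "c \<noteq> a" using \<pi>c assms(5) by blast
    ultimately have "\<pi> c = c" using \<pi>C by blast
    then show False using \<pi>c \<open>c \<in> C\<close> assms(4) by simp
  qed
  moreover have "k < c \<longleftrightarrow> k < b" if "k \<in> C" for k
  proof (cases "k = a")
    case True
    then show ?thesis using assms(6) qaut_less_iff[OF \<pi>q, of a c] \<pi>c by simp
  next
    case False
    then show ?thesis using \<pi>C[of k] that qaut_less_iff[OF \<pi>q, of k c] \<pi>c by simp
  qed
  ultimately obtain \<tau> where \<tau>: "\<tau> \<in> fixing C" "\<tau> c = b"
    using fixing_move_point[OF assms(1) _ assms(4)] by blast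
  have \<tau>q: "\<tau> \<in> qaut" using \<tau>(1) by (rule fixing_qaut)
  have "inv \<tau> b = c" using \<tau>(2) qaut_inv_f_f[OF \<tau>q] by blast
  moreover have "inv \<tau> k = k" if "k \<in> C" for k
    using fixing_inv[OF \<tau>(1)] that by (simp add: fixing_def)
  moreover have "\<pi> \<circ> inv \<tau> \<in> qaut" using \<pi>q \<tau>q by (simp add: qaut_comp qaut_inv)
  ultimately have "\<pi> \<circ> inv \<tau> \<in> fixing (insert b (C - {a}))"
    using \<pi>c \<pi>C by (simp add: fixing_def)
  then show ?thesis using that \<tau>(1) by blast
qed

lemma supports_remove_point:
  assumes act: "is_qaction act" and "finite C" "finite D" "a \<in> C" "a \<notin> D"
    and "supports act C x" "supports act D x"
  shows "supports act (C - {a}) x"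
  unfolding supports_def
proof
  fix \<pi> assume \<pi>: "\<pi> \<in> fixing (C - {a})"
  define F where "F = (C - {a}) \<union> D"
  have F: "finite F" "a \<notin> F" "C - {a} \<subseteq> F"
    using assms(2-5) by (auto simp: F_def)
  have "supports act F x"
    using supports_mono[of D F] assms(7) by (simp add: F_def)
  obtain l u where lu: "l < a" "a < u" "\<And>f. f \<in> F \<Longrightarrow> f \<le> l \<or> u \<le> f"
    using finite_gap[OF F(1,2)] by blast
  define b where "b = (if \<pi> a \<le> a then (a + u) / 2 else (l + a) / 2)"
  have b: "l < b" "b < u" "b \<noteq> a" "b \<noteq> \<pi> a" "\<pi> a < b \<longleftrightarrow> a < b"
    using lu(1,2) by (auto simp: b_def)
  have "b \<notin> F"
    using lu(3) b(1,2) by fastforce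
  moreover have "f < a \<longleftrightarrow> f < b" if "f \<in> F" for f
    using lu(1,2) lu(3)[OF that] b(1,2) by linarith
  ultimately have supp_b: "supports act (insert b (C - {a})) x"
    using supports_replace_point[OF act F(1) assms(4) F(3,2)] assms(6) \<open>supports act F x\<close>
    by presburger
  have "b \<notin> C" using \<open>b \<notin> F\<close> b(3) F(3) by blast
  then obtain \<tau> where \<tau>: "\<tau> \<in> fixing C" "\<pi> \<circ> inv \<tau> \<in> fixing (insert b (C - {a}))"
    using fixing_Diff_decompose[OF assms(2,4) \<pi> _ b(4,5)] by blast
  have \<tau>q: "\<tau> \<in> qaut" using \<tau>(1) by (rule fixing_qaut)
  have "act (\<pi> \<circ> inv \<tau>) (act \<tau> x) = x"
    using supportsD[OF supp_b \<tau>(2)] supportsD[OF assms(6) \<tau>(1)] by simp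
  moreover have "\<pi> \<circ> inv \<tau> \<circ> \<tau> = \<pi>" using \<tau>q by (simp add: fun_eq_iff)
  ultimately show "act \<pi> x = x"
    using qaction_comp[OF act fixing_qaut[OF \<tau>(2)] \<tau>q, of x] by simp
qed

lemma supports_Int:
  assumes act: "is_qaction act" and "finite C" "finite D"
    and "supports act C x" "supports act D x"
  shows "supports act (C \<inter> D) x"
proof -
  have "supports act (C - E) x" if "finite E" "E \<subseteq> C - D" for E
    using that
  proof (induction E rule: finite_induct)
    case empty
    then show ?case using assms(4) by simp
  next
    case (insert a E)
    have "supports act (C - E) x" using insert.IH insert.prems by simp
    moreover have "a \<in> C - E" "a \<notin> D" using insert.prems insert.hyps(2) by auto
    moreover have "finite (C - E)" using assms(2) by simp
    ultimately have "supports act (C - E - {a}) x"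
      using supports_remove_point[OF act _ assms(3) _ _ _ assms(5)] by blast
    moreover have "C - E - {a} = C - insert a E" by blast
    ultimately show ?case by simp
  qed
  moreover have "C - (C - D) = C \<inter> D" by blast
  ultimately show ?thesis using assms(2) by (metis finite_Diff order_refl)
qed

definition supp :: "((rat \<Rightarrow> rat) \<Rightarrow> 'x \<Rightarrow> 'x) \<Rightarrow> 'x \<Rightarrow> rat set" where
  "supp act x = \<Inter> {C. finite C \<and> supports act C x}"

lemma supp_subset: "finite D \<Longrightarrow> supports act D x \<Longrightarrow> supp act x \<subseteq> D"
  unfolding supp_def by blast

lemma least_support:
  assumes act: "is_qaction act" and "fin_supp act x"
  shows "finite (supp act x)" "supports act (supp act x) x"
proof -
  obtain C0 where "finite C0 \<and> supports act C0 x"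
    using assms(2) unfolding fin_supp_def by blast
  then obtain C where C: "finite C \<and> supports act C x"
    and min: "\<And>D. finite D \<and> supports act D x \<Longrightarrow> card C \<le> card D"
    using ex_has_least_nat[of "\<lambda>C. finite C \<and> supports act C x" C0 card] by blast
  have "C \<subseteq> D" if D: "finite D" "supports act D x" for D
  proof -
    have "supports act (C \<inter> D) x"
      using supports_Int[OF act _ D(1) _ D(2)] C by blast
    then have "card C \<le> card (C \<inter> D)"
      using min C by simp
    then have "C \<inter> D = C"
      using C card_seteq[of C "C \<inter> D"] by simp
    then show ?thesis by blast
  qed
  then have "supp act x = C"
    using C unfolding supp_def by blast
  then show "finite (supp act x)" "supports act (supp act x) x"
    using C by simp_all
qed

lemma supp_act:
  assumes act: "is_qaction act" and \<pi>: "\<pi> \<in> qaut" and "fin_supp act x"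
  shows "supp act (act \<pi> x) = \<pi> ` supp act x"
proof
  note x = least_support[OF act assms(3)]
  have "supports act (\<pi> ` supp act x) (act \<pi> x)"
    using supports_act[OF act \<pi> x(2)] .
  then show "supp act (act \<pi> x) \<subseteq> \<pi> ` supp act x"
    using x(1) by (simp add: supp_subset)
  note y = least_support[OF act fin_supp_act[OF act \<pi> assms(3)]]
  have "supports act (inv \<pi> ` supp act (act \<pi> x)) x"
    using supports_act[OF act qaut_inv[OF \<pi>] y(2)] act \<pi> by simp
  then have "supp act x \<subseteq> inv \<pi> ` supp act (act \<pi> x)"
    using y(1) by (simp add: supp_subset)
  then show "\<pi> ` supp act x \<subseteq> supp act (act \<pi> x)"
    using \<pi> by (auto simp: qaut_image_iff)
qed

lemma act_eq_self_if_supp_invariant: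
  assumes act: "is_qaction act" and "\<pi> \<in> qaut" "fin_supp act x" "\<pi> ` supp act x = supp act x"
  shows "act \<pi> x = x"
proof -
  have "\<pi> \<in> fixing (supp act x)"
    using qaut_fixes_invariant_finite[OF assms(2) least_support(1)[OF act assms(3)] assms(4)]
      assms(2)
    by (simp add: fixing_def)
  then show ?thesis
    by (rule supportsD[OF least_support(2)[OF act assms(3)]])
qed

lemma act_eq_act_if_supp_eq:
  assumes act: "is_qaction act" and "g \<in> qaut" "h \<in> qaut" "fin_supp act x"
    and "supp act (act g x) = supp act (act h x)"
  shows "act g x = act h x"
proof -
  define k where "k = g \<circ> inv h"
  have kq: "k \<in> qaut" using assms(2,3) by (simp add: k_def qaut_comp qaut_inv)
  have fs: "fin_supp act (act h x)" using fin_supp_act[OF act assms(3,4)] .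
  have "act g x = act k (act h x)"
    using qaction_comp[OF act assms(2) qaut_inv[OF assms(3)], of "act h x", symmetric] act assms(3)
    by (simp add: k_def)
  then show ?thesis
    using act_eq_self_if_supp_invariant[OF act kq fs] assms(5) supp_act[OF act kq fs] by simp
qed

definition supp_nth :: "((rat \<Rightarrow> rat) \<Rightarrow> 'x \<Rightarrow> 'x) \<Rightarrow> 'x \<Rightarrow> nat \<Rightarrow> rat" where
  "supp_nth act x j = sorted_list_of_set (supp act x) ! j"

lemma supp_nth_less_iff:
  assumes "i < card (supp act x)" "k < card (supp act x)"
  shows "supp_nth act x i < supp_nth act x k \<longleftrightarrow> i < k"
proof -
  have "sorted_wrt (<) (sorted_list_of_set (supp act x))" by simp
  then have "i < k \<Longrightarrow> supp_nth act x i < supp_nth act x k"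
    "k < i \<Longrightarrow> supp_nth act x k < supp_nth act x i"
    using assms by (simp_all add: supp_nth_def sorted_wrt_iff_nth_less)
  then show ?thesis by (metis less_asym linorder_neqE order_less_irrefl)
qed

lemma supp_eq_supp_nth_image:
  "finite (supp act x) \<Longrightarrow> supp act x = supp_nth act x ` {..<card (supp act x)}"
  using nth_image[of "card (supp act x)" "sorted_list_of_set (supp act x)"]
  by (simp add: supp_nth_def atLeast0LessThan image_def)

lemma card_supp_act:
  assumes "is_qaction act" "\<pi> \<in> qaut" "fin_supp act x"
  shows "card (supp act (act \<pi> x)) = card (supp act x)"
  using supp_act[OF assms] assms(2) by (simp add: card_image inj_on_def)

lemma supp_nth_act:
  assumes "is_qaction act" "\<pi> \<in> qaut" "fin_supp act x" "j < card (supp act x)"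
  shows "supp_nth act (act \<pi> x) j = \<pi> (supp_nth act x j)"
  using assms(4) least_support(1)[OF assms(1,3)]
  by (simp add: supp_nth_def supp_act[OF assms(1-3)] sorted_list_of_set_qaut_image[OF assms(2)])

lemma orbit_self:
  assumes "is_qaction act"
  shows "x \<in> orbit act A x"
proof -
  have "x = act id x" using qaction_id[OF assms] by simp
  then show ?thesis unfolding orbit_def using fixing_id by blast
qed

lemma orbit_act:
  assumes act: "is_qaction act" and "\<pi> \<in> fixing A"
  shows "orbit act A (act \<pi> x) = orbit act A x"
proof -
  have \<pi>q: "\<pi> \<in> qaut" using assms(2) by (rule fixing_qaut)
  have "act \<sigma> (act \<pi> x) \<in> orbit act A x" if "\<sigma> \<in> fixing A" for \<sigma>
    using qaction_comp[OF act fixing_qaut[OF that] \<pi>q] fixing_comp[OF that assms(2)]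
    unfolding orbit_def by auto
  moreover have "act \<sigma> x \<in> orbit act A (act \<pi> x)" if "\<sigma> \<in> fixing A" for \<sigma>
  proof -
    have "act \<sigma> x = act (\<sigma> \<circ> inv \<pi>) (act \<pi> x)"
      using qaction_comp[OF act fixing_qaut[OF that] qaut_inv[OF \<pi>q], of "act \<pi> x", symmetric]
        act \<pi>q by simp
    then show ?thesis
      using fixing_comp[OF that fixing_inv[OF assms(2)]] unfolding orbit_def by blast
  qed
  ultimately show ?thesis unfolding orbit_def by blast
qed

lemma orbit_eq_if_mem:
  assumes "is_qaction act" "y \<in> orbit act A x"
  shows "orbit act A y = orbit act A x"
proof -
  obtain \<sigma> where "\<sigma> \<in> fixing A" "y = act \<sigma> x"
    using assms(2) unfolding orbit_def by blast
  then show ?thesis using orbit_act[OF assms(1)] by simp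
qed

lemma act_mem_orbit:
  assumes "is_qaction act" "\<sigma> \<in> fixing A" "y \<in> orbit act A x"
  shows "act \<sigma> y \<in> orbit act A x"
proof -
  have "act \<sigma> y \<in> orbit act A y"
    unfolding orbit_def using assms(2) by blast
  then show ?thesis using orbit_eq_if_mem[OF assms(1,3)] by simp
qed

lemma set_act_orbit:
  assumes act: "is_qaction act" and "\<pi> \<in> fixing A"
  shows "set_act act \<pi> (orbit act A x) = orbit act A x"
proof
  show "set_act act \<pi> (orbit act A x) \<subseteq> orbit act A x"
    unfolding set_act_def using act_mem_orbit[OF act assms(2)] by blast
  show "orbit act A x \<subseteq> set_act act \<pi> (orbit act A x)"
  proof
    fix y assume "y \<in> orbit act A x"
    then have "act (inv \<pi>) y \<in> orbit act A x"
      using act_mem_orbit[OF act fixing_inv[OF assms(2)]] by blast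
    then show "y \<in> set_act act \<pi> (orbit act A x)"
      using mem_set_act_iff[OF act fixing_qaut[OF assms(2)]] by blast
  qed
qed

lemma orbit_if_same_position:
  assumes act: "is_qaction act" and "h \<in> qaut" "fin_supp act x" "y = act h x" "finite C"
    and same: "\<And>j c. j < card (supp act x) \<Longrightarrow> c \<in> C \<Longrightarrow>
      (c < supp_nth act x j \<longleftrightarrow> c < supp_nth act y j) \<and> (c = supp_nth act x j \<longleftrightarrow> c = supp_nth act y j)"
  shows "y \<in> orbit act C x"
proof -
  define n where "n = card (supp act x)"
  have fs: "fin_supp act y" using fin_supp_act[OF act assms(2,3)] assms(4) by simp
  have n: "card (supp act y) = n"
    using card_supp_act[OF act assms(2,3)] assms(4) by (simp add: n_def)
  have "\<exists>g\<in>fixing C. \<forall>j<n. g (supp_nth act x j) = supp_nth act y j"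
  proof (rule fixing_extend[OF assms(5) finite_lessThan, of n "supp_nth act x" "supp_nth act y"])
    show "supp_nth act x i < supp_nth act x k \<longleftrightarrow> supp_nth act y i < supp_nth act y k"
      if "i \<in> {..<n}" "k \<in> {..<n}" for i k
      using supp_nth_less_iff[of _ act x] supp_nth_less_iff[of _ act y] that n by (simp add: n_def)
    show "c < supp_nth act x j \<longleftrightarrow> c < supp_nth act y j" if "j \<in> {..<n}" "c \<in> C" for j c
      using same that by (simp add: n_def)
    show "supp_nth act x j < c \<longleftrightarrow> supp_nth act y j < c" if "j \<in> {..<n}" "c \<in> C" for j c
      using same[of j c] that by (simp add: n_def) (metis linorder_neqE order_less_asym)
  qed auto
  then obtain g where g: "g \<in> fixing C" "\<And>j. j < n \<Longrightarrow> g (supp_nth act x j) = supp_nth act y j"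
    by blast
  have gq: "g \<in> qaut" using g(1) by (rule fixing_qaut)
  have "supp act (act g x) = g ` supp_nth act x ` {..<n}"
    using supp_act[OF act gq assms(3)] supp_eq_supp_nth_image[OF least_support(1)[OF act assms(3)]]
    by (simp add: n_def)
  also have "\<dots> = supp act y"
    using g(2) supp_eq_supp_nth_image[OF least_support(1)[OF act fs]] n by (force simp: image_comp)
  finally have "act g x = y"
    using act_eq_act_if_supp_eq[OF act gq assms(2,3)] assms(4) by simp
  then show ?thesis
    using g(1) unfolding orbit_def by blast
qed

section \<open>Ultrafilters on Boolean algebras of sets\<close>

lemma ultrafilter_onD:
  assumes "is_ultrafilter_on X B U"
  shows ultrafilter_on_subset: "U \<subseteq> B"
    and ultrafilter_on_top: "X \<in> U"
    and ultrafilter_on_empty: "{} \<notin> U"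
    and ultrafilter_on_mono: "\<And>S T. S \<in> U \<Longrightarrow> T \<in> B \<Longrightarrow> S \<subseteq> T \<Longrightarrow> T \<in> U"
    and ultrafilter_on_Int: "\<And>S T. S \<in> U \<Longrightarrow> T \<in> U \<Longrightarrow> S \<inter> T \<in> U"
    and ultrafilter_on_compl: "\<And>S. S \<in> B \<Longrightarrow> S \<notin> U \<Longrightarrow> X - S \<in> U"
  using assms unfolding is_ultrafilter_on_def by (simp_all, meson)

lemma ultrafilter_on_disjoint:
  "is_ultrafilter_on X B U \<Longrightarrow> S \<in> U \<Longrightarrow> T \<in> U \<Longrightarrow> S \<inter> T \<noteq> {}"
  using ultrafilter_on_Int ultrafilter_on_empty by metis

lemma ultrafilter_on_INT:
  assumes "is_ultrafilter_on X B U" "finite I" "\<And>i. i \<in> I \<Longrightarrow> Y i \<in> U"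
  shows "X \<inter> (\<Inter>i\<in>I. Y i) \<in> U"
  using assms(2,3)
proof (induction I rule: finite_induct)
  case empty
  then show ?case using ultrafilter_on_top[OF assms(1)] by simp
next
  case (insert i I)
  then have "(X \<inter> (\<Inter>i\<in>I. Y i)) \<inter> Y i \<in> U"
    using ultrafilter_on_Int[OF assms(1)] by blast
  then show ?case by (simp add: Int_ac)
qed

lemma ultrafilter_on_cover:
  assumes "is_ultrafilter_on X B U" "finite W" "W \<subseteq> B" "X \<subseteq> \<Union>W"
  shows "\<exists>S\<in>W. S \<in> U"
proof (rule ccontr)
  assume "\<not> (\<exists>S\<in>W. S \<in> U)"
  then have "X - S \<in> U" if "S \<in> W" for S
    using that assms(3) ultrafilter_on_compl[OF assms(1)] by blast
  then have "X \<inter> (\<Inter>S\<in>W. X - S) \<in> U"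
    using ultrafilter_on_INT[OF assms(1,2)] by blast
  moreover have "X \<inter> (\<Inter>S\<in>W. X - S) = {}" using assms(4) by blast
  ultimately show False using ultrafilter_on_empty[OF assms(1)] by simp
qed

lemma ultrafilter_on_image:
  assumes u: "is_ultrafilter_on X B U" and "bij h" "h ` X = X" "(\<lambda>S. h ` S) ` B = B"
  shows "is_ultrafilter_on X B ((\<lambda>S. h ` S) ` U)"
proof -
  have inj: "inj h" using assms(2) by (rule bij_is_inj)
  have B: "S \<in> B \<longleftrightarrow> h ` S \<in> B" for S
    using assms(4) inj by (metis (no_types, lifting) image_iff inj_image_eq_iff)
  have mem: "h ` S \<in> (\<lambda>S. h ` S) ` U \<longleftrightarrow> S \<in> U" for S
    using inj by (auto simp: inj_image_eq_iff)
  have surj: "T \<in> B \<Longrightarrow> \<exists>S\<in>B. T = h ` S" for T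
    using assms(4) by blast
  show ?thesis
    unfolding is_ultrafilter_on_def
  proof (intro conjI ballI impI)
    show "(\<lambda>S. h ` S) ` U \<subseteq> B"
      using ultrafilter_on_subset[OF u] B by blast
    show "X \<in> (\<lambda>S. h ` S) ` U"
      using ultrafilter_on_top[OF u] assms(3) mem by metis
    show "{} \<notin> (\<lambda>S. h ` S) ` U"
      using ultrafilter_on_empty[OF u] by auto
  next
    fix S T assume "S \<in> (\<lambda>S. h ` S) ` U" "T \<in> B" "S \<subseteq> T"
    then show "T \<in> (\<lambda>S. h ` S) ` U"
      using surj[of T] B ultrafilter_on_mono[OF u] inj mem by (metis image_iff inj_image_subset_iff)
  next
    fix S T assume "S \<in> (\<lambda>S. h ` S) ` U" "T \<in> (\<lambda>S. h ` S) ` U"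
    then show "S \<inter> T \<in> (\<lambda>S. h ` S) ` U"
      using ultrafilter_on_Int[OF u] inj by (auto simp: image_Int[symmetric])
  next
    fix T assume "T \<in> B"
    then obtain S where "S \<in> B" "T = h ` S" using surj by blast
    moreover have "h ` (X - S) = X - h ` S"
      using inj assms(3) by (simp add: image_set_diff)
    ultimately show "T \<in> (\<lambda>S. h ` S) ` U \<or> X - T \<in> (\<lambda>S. h ` S) ` U"
      using u mem unfolding is_ultrafilter_on_def by metis
  qed
qed

section \<open>Invariant subsets of \<open>\<rat>\<close> and order types\<close>

datatype shape = Empty | Full | Below | Upto | Single

primrec shape_set :: "shape \<Rightarrow> rat \<Rightarrow> rat set" where
  "shape_set Empty b = {}"
| "shape_set Full b = UNIV"
| "shape_set Below b = {..<b}"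
| "shape_set Upto b = {..b}"
| "shape_set Single b = {b}"

lemma finite_UNIV_shape: "finite (UNIV :: shape set)"
proof -
  have "UNIV = {Empty, Full, Below, Upto, Single}" using shape.exhaust by auto
  then show ?thesis by (metis finite.emptyI finite_insert)
qed

lemma qaut_image_shape_set:
  assumes "\<pi> \<in> qaut"
  shows "\<pi> ` shape_set s b = shape_set s (\<pi> b)"
proof -
  have "inv \<pi> q < b \<longleftrightarrow> q < \<pi> b" "inv \<pi> q \<le> b \<longleftrightarrow> q \<le> \<pi> b" "inv \<pi> q = b \<longleftrightarrow> q = \<pi> b" for q
    using qaut_less_iff[OF assms, of "inv \<pi> q" b] qaut_le_iff[OF assms, of "inv \<pi> q" b]
      qaut_eq_iff[OF assms, of "inv \<pi> q" b] assms by simp_all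
  then show ?thesis
    using assms qaut_bij[OF assms] by (cases s) (auto simp: qaut_image_iff bij_is_surj)
qed

definition shape_repr :: "rat set \<Rightarrow> shape \<times> rat" where
  "shape_repr D = (SOME p. D = shape_set (fst p) (snd p))"

lemma shape_set_shape_repr:
  assumes "D = shape_set s b"
  shows "shape_set (fst (shape_repr D)) (snd (shape_repr D)) = D"
proof -
  have "D = shape_set (fst (s, b)) (snd (s, b))" using assms by simp
  then have "D = shape_set (fst (shape_repr D)) (snd (shape_repr D))"
    unfolding shape_repr_def by (rule someI)
  then show ?thesis by simp
qed

lemma downclosed_cut_cases:
  fixes D :: "rat set"
  assumes down: "\<And>x y. x \<in> D \<Longrightarrow> y \<le> x \<Longrightarrow> y \<in> D" and "m \<in> D" "M \<notin> D"
    and all_or_none: "\<And>t t'. t \<in> D \<Longrightarrow> m < t \<Longrightarrow> t < M \<Longrightarrow> m < t' \<Longrightarrow> t' < M \<Longrightarrow> t' \<in> D"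
  shows "D = {..<M} \<or> D = {..m}"
proof -
  have "m < M" using assms(2,3) down by (meson not_less)
  define t where "t = (m + M) / 2"
  have t: "m < t" "t < M" using \<open>m < M\<close> by (simp_all add: t_def)
  show ?thesis
  proof (cases "t \<in> D")
    case True
    have "D \<subseteq> {..<M}" using assms(3) down by (meson lessThan_iff not_less subsetI)
    moreover have "x \<in> D" if "x < M" for x
      using all_or_none[OF True t, of x] down[OF assms(2), of x] that by (cases "x \<le> m") auto
    ultimately show ?thesis by blast
  next
    case False
    have "\<not> m < x" if "x \<in> D" for x
    proof
      assume "m < x"
      then show False
        using all_or_none[OF that _ _ t] False assms(3) down[OF that, of M] by (cases "x < M") auto
    qed
    then have "D \<subseteq> {..m}" by (meson atMost_iff not_less subsetI)
    moreover have "{..m} \<subseteq> D" using assms(2) down by blast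
    ultimately show ?thesis by blast
  qed
qed

lemma downclosed_invariant_shape:
  fixes D B :: "rat set"
  assumes "finite B" and down: "\<And>x y. x \<in> D \<Longrightarrow> y \<le> x \<Longrightarrow> y \<in> D"
    and inv: "\<And>\<pi> q. \<pi> \<in> fixing B \<Longrightarrow> q \<in> D \<Longrightarrow> \<pi> q \<in> D"
  obtains s b where "D = shape_set s b"
proof (cases "D = {} \<or> D = UNIV")
  case True
  then show ?thesis using that shape_set.simps(1,2) by metis
next
  case False
  then obtain q r where "q \<in> D" "r \<notin> D" by blast
  define m where "m = Max (insert q B \<inter> D)"
  define M where "M = Min (insert r B - D)"
  have "m \<in> insert q B \<inter> D"
    unfolding m_def using assms(1) \<open>q \<in> D\<close> by (intro Max_in) auto
  moreover have "k \<le> m" if "k \<in> B" "k \<in> D" for k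
    unfolding m_def using assms(1) that by (intro Max_ge) auto
  moreover have "M \<in> insert r B - D"
    unfolding M_def using assms(1) \<open>r \<notin> D\<close> by (intro Min_in) auto
  moreover have "M \<le> k" if "k \<in> B" "k \<notin> D" for k
    unfolding M_def using assms(1) that by (intro Min_le) auto
  ultimately have m: "m \<in> D" and M: "M \<notin> D" and B_outside: "\<And>k. k \<in> B \<Longrightarrow> k \<le> m \<or> M \<le> k"
    by blast+
  have all_or_none: "t' \<in> D" if "t \<in> D" "m < t" "t < M" "m < t'" "t' < M" for t t'
  proof -
    have "t \<notin> B" "t' \<notin> B" using B_outside that(2-5) by (meson not_less)+
    moreover have "k < t \<longleftrightarrow> k < t'" if "k \<in> B" for k
      using B_outside[OF that] \<open>m < t\<close> \<open>t < M\<close> \<open>m < t'\<close> \<open>t' < M\<close> by linarith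
    ultimately obtain \<rho> where "\<rho> \<in> fixing B" "\<rho> t = t'"
      using fixing_move_point[OF assms(1)] by blast
    then show ?thesis using inv that(1) by metis
  qed
  have "D = {..<M} \<or> D = {..m}"
    by (rule downclosed_cut_cases[OF down m M all_or_none])
  then show ?thesis using that shape_set.simps(3,4) by metis
qed

definition order_type ::
    "rat set \<Rightarrow> 'i set \<Rightarrow> ('i \<Rightarrow> rat) \<Rightarrow> ('i \<times> 'i) set \<times> ('i \<times> rat) set \<times> ('i \<times> rat) set"
  where
  "order_type A I P =
     ({(i, k) \<in> I \<times> I. P i < P k}, {(i, a) \<in> I \<times> A. P i < a}, {(i, a) \<in> I \<times> A. a < P i})"

lemma finite_order_types:
  assumes "finite A" "finite I"
  shows "finite (order_type A I ` S)"
proof (rule finite_subset)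
  show "order_type A I ` S \<subseteq> Pow (I \<times> I) \<times> Pow (I \<times> A) \<times> Pow (I \<times> A)"
    unfolding order_type_def by auto
qed (use assms in simp)

lemma fixing_if_order_type_eq:
  assumes "finite A" "finite I" "order_type A I P = order_type A I P'"
  obtains \<pi> where "\<pi> \<in> fixing A" "\<And>i. i \<in> I \<Longrightarrow> \<pi> (P i) = P' i"
proof (rule fixing_extend[OF assms(1,2)])
  have eq: "{(i, k) \<in> I \<times> I. P i < P k} = {(i, k) \<in> I \<times> I. P' i < P' k}"
    "{(i, a) \<in> I \<times> A. P i < a} = {(i, a) \<in> I \<times> A. P' i < a}"
    "{(i, a) \<in> I \<times> A. a < P i} = {(i, a) \<in> I \<times> A. a < P' i}"
    using assms(3) by (simp_all add: order_type_def)
  show "P i < P k \<longleftrightarrow> P' i < P' k" if "i \<in> I" "k \<in> I" for i k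
    using eq(1) that by (simp add: set_eq_iff) (metis (no_types, lifting) case_prod_conv)
  show "P i < a \<longleftrightarrow> P' i < a" if "i \<in> I" "a \<in> A" for i a
    using eq(2) that by (simp add: set_eq_iff) (metis (no_types, lifting) case_prod_conv)
  show "a < P i \<longleftrightarrow> a < P' i" if "i \<in> I" "a \<in> A" for i a
    using eq(3) that by (simp add: set_eq_iff) (metis (no_types, lifting) case_prod_conv)
qed (use that in blast)

lemma finite_image_if_factors:
  assumes "finite (h ` S)" "\<And>x y. x \<in> S \<Longrightarrow> y \<in> S \<Longrightarrow> h x = h y \<Longrightarrow> f x = f y"
  shows "finite (f ` S)"
proof -
  define g where "g k = f (SOME x. x \<in> S \<and> h x = k)" for k
  have "g (h x) = f x" if "x \<in> S" for x
  proof -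
    have "\<exists>y. y \<in> S \<and> h y = h x" using that by blast
    then have "(SOME y. y \<in> S \<and> h y = h x) \<in> S \<and> h (SOME y. y \<in> S \<and> h y = h x) = h x"
      by (rule someI_ex)
    then show ?thesis using assms(2) that unfolding g_def by blast
  qed
  then have "f ` S \<subseteq> g ` h ` S"
    by (metis image_eqI image_subsetI)
  then show ?thesis using assms(1) finite_surj by blast
qed

section \<open>The Stone compactification of a definable set\<close>

type_synonym coord_index = "(rat \<Rightarrow> rat \<Rightarrow> bool) \<times> nat"

definition coord_rels :: "(rat \<Rightarrow> rat \<Rightarrow> bool) set" where
  "coord_rels = {(<), (=)}"

lemma coord_rels_qaut: "R \<in> coord_rels \<Longrightarrow> \<pi> \<in> qaut \<Longrightarrow> R (\<pi> a) (\<pi> b) \<longleftrightarrow> R a b"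
  by (auto simp: coord_rels_def)

lemma finite_coord_rels: "finite coord_rels"
  by (simp add: coord_rels_def)

locale definable_over =
  fixes act :: "(rat \<Rightarrow> rat) \<Rightarrow> 'x \<Rightarrow> 'x" and A :: "rat set" and X :: "'x set"
  assumes act: "is_qaction act" and finite_A: "finite A"
    and supports_X: "supports (set_act act) A X"
    and fin_supp_X: "\<And>x. x \<in> X \<Longrightarrow> fin_supp act x" and finite_orbits: "finite (orbit act A ` X)"
begin

lemma act_image_X: "\<pi> \<in> fixing A \<Longrightarrow> act \<pi> ` X = X"
  using supportsD[OF supports_X] unfolding set_act_def by blast

lemma act_mem_X: "\<pi> \<in> fixing A \<Longrightarrow> x \<in> X \<Longrightarrow> act \<pi> x \<in> X"
  using act_image_X by blast

lemma fs_subsets_act: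
  assumes "\<pi> \<in> fixing A" "S \<in> fs_subsets act X"
  shows "act \<pi> ` S \<in> fs_subsets act X"
proof -
  have "act \<pi> ` S \<subseteq> X" using assms act_image_X by (auto simp: fs_subsets_def)
  moreover have "fin_supp (set_act act) (set_act act \<pi> S)"
    using fin_supp_act[OF qaction_set_act[OF act] fixing_qaut[OF assms(1)]] assms(2)
    by (simp add: fs_subsets_def)
  ultimately show ?thesis by (simp add: fs_subsets_def set_act_def)
qed

lemma fs_subsets_image_act:
  assumes "\<pi> \<in> fixing A"
  shows "(\<lambda>S. act \<pi> ` S) ` fs_subsets act X = fs_subsets act X"
proof
  show "(\<lambda>S. act \<pi> ` S) ` fs_subsets act X \<subseteq> fs_subsets act X"
    using fs_subsets_act[OF assms] by blast
  show "fs_subsets act X \<subseteq> (\<lambda>S. act \<pi> ` S) ` fs_subsets act X"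
  proof
    fix S assume "S \<in> fs_subsets act X"
    then have "act (inv \<pi>) ` S \<in> fs_subsets act X"
      using fs_subsets_act[OF fixing_inv[OF assms]] by blast
    moreover have "S = act \<pi> ` act (inv \<pi>) ` S"
      using act fixing_qaut[OF assms] by (simp add: image_comp comp_def)
    ultimately show "S \<in> (\<lambda>S. act \<pi> ` S) ` fs_subsets act X"
      by (rule rev_image_eqI)
  qed
qed

lemma stone_act:
  assumes "\<pi> \<in> fixing A" "U \<in> stone act X"
  shows "set_act (set_act act) \<pi> U \<in> stone act X"
proof -
  have \<pi>q: "\<pi> \<in> qaut" using assms(1) by (rule fixing_qaut)
  have "bij (act \<pi>)"
    by (rule o_bij[of "act (inv \<pi>)"]) (simp_all add: fun_eq_iff act \<pi>q)
  moreover have "is_ultrafilter_on X (fs_subsets act X) U"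
    using assms(2) by (simp add: stone_def)
  ultimately have "is_ultrafilter_on X (fs_subsets act X) ((\<lambda>S. act \<pi> ` S) ` U)"
    using ultrafilter_on_image act_image_X[OF assms(1)] fs_subsets_image_act[OF assms(1)] by blast
  moreover have "fin_supp (set_act (set_act act)) (set_act (set_act act) \<pi> U)"
    using fin_supp_act[OF qaction_set_act[OF qaction_set_act[OF act]] \<pi>q] assms(2)
    by (simp add: stone_def)
  ultimately show ?thesis
    unfolding stone_def set_act_def by simp
qed

lemma supports_stone: "supports (set_act (set_act (set_act act))) A (stone act X)"
  unfolding supports_def
proof
  fix \<pi> assume \<pi>: "\<pi> \<in> fixing A"
  have "set_act (set_act act) \<pi> (set_act (set_act act) (inv \<pi>) U) = U" for U
    using qaction_act_inv[OF qaction_set_act[OF qaction_set_act[OF act]] fixing_qaut[OF \<pi>]] .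
  then show "set_act (set_act (set_act act)) \<pi> (stone act X) = stone act X"
    using stone_act[OF \<pi>] stone_act[OF fixing_inv[OF \<pi>]]
    unfolding set_act_def[of "set_act (set_act act)"]
    by (metis image_eqI subsetI subset_antisym image_subsetI)
qed

lemma orbit_subset_X: "x \<in> X \<Longrightarrow> orbit act A x \<subseteq> X"
  unfolding orbit_def using act_mem_X by blast

lemma orbit_fs_subset:
  assumes "x \<in> X"
  shows "orbit act A x \<in> fs_subsets act X"
proof -
  have "supports (set_act act) A (orbit act A x)"
    unfolding supports_def using set_act_orbit[OF act] by blast
  then show ?thesis
    using orbit_subset_X[OF assms] finite_A unfolding fs_subsets_def fin_supp_def by blast
qed

lemma stone_contains_orbit:
  assumes "U \<in> stone act X"
  obtains x0 where "x0 \<in> X" "orbit act A x0 \<in> U"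
proof -
  have "\<exists>W\<in>orbit act A ` X. W \<in> U"
    by (rule ultrafilter_on_cover[of X "fs_subsets act X"])
      (use assms finite_orbits orbit_fs_subset orbit_self[OF act] in \<open>auto simp: stone_def\<close>)
  then show ?thesis using that by blast
qed

lemma card_supp_orbit: "x \<in> X \<Longrightarrow> y \<in> orbit act A x \<Longrightarrow> card (supp act y) = card (supp act x)"
  unfolding orbit_def using card_supp_act[OF act fixing_qaut] fin_supp_X by blast

definition supp_bound :: nat where
  "supp_bound = Suc (Max ((\<lambda>x. card (supp act x)) ` X))"

lemma card_supp_less_bound:
  assumes "x \<in> X"
  shows "card (supp act x) < supp_bound"
proof -
  have "finite ((\<lambda>x. card (supp act x)) ` X)"
  proof (rule finite_image_if_factors[OF finite_orbits])
    fix x y assume "x \<in> X" "y \<in> X" "orbit act A x = orbit act A y"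
    then show "card (supp act x) = card (supp act y)"
      using card_supp_orbit orbit_self[OF act] by metis
  qed
  then show ?thesis
    using assms by (simp add: supp_bound_def le_imp_less_Suc)
qed

definition coord_set :: "(rat \<Rightarrow> rat \<Rightarrow> bool) \<Rightarrow> nat \<Rightarrow> rat \<Rightarrow> 'x set" where
  "coord_set R j q = {x \<in> X. j < card (supp act x) \<and> R q (supp_nth act x j)}"

lemma act_mem_coord_set:
  assumes "\<pi> \<in> fixing A" "R \<in> coord_rels" "x \<in> coord_set R j q"
  shows "act \<pi> x \<in> coord_set R j (\<pi> q)"
proof -
  have \<pi>q: "\<pi> \<in> qaut" using assms(1) by (rule fixing_qaut)
  have x: "x \<in> X" "j < card (supp act x)" "R q (supp_nth act x j)"
    using assms(3) by (auto simp: coord_set_def)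
  then show ?thesis
    using act_mem_X[OF assms(1) x(1)] card_supp_act[OF act \<pi>q fin_supp_X]
      supp_nth_act[OF act \<pi>q fin_supp_X]
      coord_rels_qaut[OF assms(2) \<pi>q]
    by (simp add: coord_set_def)
qed

lemma coord_set_act:
  assumes "\<pi> \<in> fixing A" "R \<in> coord_rels"
  shows "act \<pi> ` coord_set R j q = coord_set R j (\<pi> q)"
proof
  show "act \<pi> ` coord_set R j q \<subseteq> coord_set R j (\<pi> q)"
    using act_mem_coord_set[OF assms] by blast
  have \<pi>q: "\<pi> \<in> qaut" using assms(1) by (rule fixing_qaut)
  show "coord_set R j (\<pi> q) \<subseteq> act \<pi> ` coord_set R j q"
  proof
    fix y assume "y \<in> coord_set R j (\<pi> q)"
    then have "act (inv \<pi>) y \<in> coord_set R j q"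
      using act_mem_coord_set[OF fixing_inv[OF assms(1)] assms(2)] \<pi>q by fastforce
    then show "y \<in> act \<pi> ` coord_set R j q"
      using act \<pi>q by (metis image_eqI qaction_act_inv)
  qed
qed

lemma coord_set_fs_subset:
  assumes "R \<in> coord_rels"
  shows "coord_set R j q \<in> fs_subsets act X"
proof -
  have "supports (set_act act) (insert q A) (coord_set R j q)"
    unfolding supports_def set_act_def
    using coord_set_act[OF _ assms] by (simp add: fixing_insert_iff)
  then show ?thesis
    using finite_A unfolding fs_subsets_def fin_supp_def coord_set_def by blast
qed

text \<open>For \<open>R = (<)\<close> this is a lower cut; for \<open>R = (=)\<close> it is the value of the \<open>j\<close>-th coordinate
  at \<open>U\<close>, if any.\<close>
definition profile :: "'x set set \<Rightarrow> coord_index \<Rightarrow> rat set" where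
  "profile U = (\<lambda>(R, j). {q. coord_set R j q \<in> U})"

lemma profile_act:
  assumes "\<pi> \<in> fixing A" "R \<in> coord_rels"
  shows "profile (set_act (set_act act) \<pi> U) (R, j) = \<pi> ` profile U (R, j)"
proof -
  have \<pi>q: "\<pi> \<in> qaut" using assms(1) by (rule fixing_qaut)
  have "coord_set R j q \<in> set_act (set_act act) \<pi> U \<longleftrightarrow> coord_set R j (inv \<pi> q) \<in> U" for q
  proof -
    have "coord_set R j q \<in> set_act (set_act act) \<pi> U \<longleftrightarrow> set_act act (inv \<pi>) (coord_set R j q) \<in> U"
      by (rule mem_set_act_iff[OF qaction_set_act[OF act] \<pi>q])
    also have "set_act act (inv \<pi>) (coord_set R j q) = coord_set R j (inv \<pi> q)"
      using coord_set_act[OF fixing_inv[OF assms(1)] assms(2)] by (simp add: set_act_def)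
    finally show ?thesis .
  qed
  then show ?thesis
    unfolding profile_def by (simp add: set_eq_iff qaut_image_iff[OF \<pi>q])
qed

lemma orbits_act:
  assumes "\<pi> \<in> fixing A"
  shows "orbit act A ` X \<inter> set_act (set_act act) \<pi> U = orbit act A ` X \<inter> U"
  using mem_set_act_iff[OF qaction_set_act[OF act] fixing_qaut[OF assms]]
    set_act_orbit[OF act fixing_inv[OF assms]] by auto

definition cell :: "'x set set \<Rightarrow> 'x \<Rightarrow> rat set \<Rightarrow> 'x set" where
  "cell U x0 C = orbit act A x0 \<inter> (X \<inter> (\<Inter>(R, j, c) \<in> coord_rels \<times> {..<card (supp act x0)} \<times> C.
     if coord_set R j c \<in> U then coord_set R j c else X - coord_set R j c))"

lemma cell_mem:
  assumes "U \<in> stone act X" "orbit act A x0 \<in> U" "finite C"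
  shows "cell U x0 C \<in> U"
proof -
  have u: "is_ultrafilter_on X (fs_subsets act X) U"
    using assms(1) by (simp add: stone_def)
  have "X \<inter> (\<Inter>(R, j, c) \<in> coord_rels \<times> {..<card (supp act x0)} \<times> C.
      if coord_set R j c \<in> U then coord_set R j c else X - coord_set R j c) \<in> U"
  proof (rule ultrafilter_on_INT[OF u])
    show "finite (coord_rels \<times> {..<card (supp act x0)} \<times> C)"
      using finite_coord_rels assms(3) by simp
    fix i assume "i \<in> coord_rels \<times> {..<card (supp act x0)} \<times> C"
    then obtain R j c where "i = (R, j, c)" "R \<in> coord_rels" by blast
    then show "(case i of (R, j, c) \<Rightarrow>
        if coord_set R j c \<in> U then coord_set R j c else X - coord_set R j c) \<in> U"
      using ultrafilter_on_compl[OF u coord_set_fs_subset] by simp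
  qed
  then show ?thesis
    unfolding cell_def using ultrafilter_on_Int[OF u assms(2)] by blast
qed

lemma cell_eq_if_same_profile:
  assumes "\<And>R j. R \<in> coord_rels \<Longrightarrow> profile U (R, j) = profile U' (R, j)"
  shows "cell U x0 C = cell U' x0 C"
proof -
  have "coord_set R j c \<in> U \<longleftrightarrow> coord_set R j c \<in> U'" if "R \<in> coord_rels" for R j c
    using assms[OF that, of j] by (simp add: profile_def set_eq_iff)
  then show ?thesis
    unfolding cell_def by (intro arg_cong2[where f = "(\<inter>)"] refl INF_cong) auto
qed

lemma mem_coord_set_if_mem_cell:
  assumes "z \<in> cell U x0 C" "R \<in> coord_rels" "j < card (supp act x0)" "c \<in> C"
  shows "z \<in> coord_set R j c \<longleftrightarrow> coord_set R j c \<in> U"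
  using assms unfolding cell_def by (auto split: if_splits)

lemma cell_subset_orbit:
  assumes "x0 \<in> X" "finite C" "x \<in> cell U x0 C" "y \<in> cell U x0 C"
  shows "y \<in> orbit act C x"
proof -
  have orbit: "x \<in> orbit act A x0" "y \<in> orbit act A x0"
    using assms(3,4) by (simp_all add: cell_def)
  then have X: "x \<in> X" "y \<in> X" using orbit_subset_X[OF assms(1)] by blast+
  have card: "card (supp act x) = card (supp act x0)" "card (supp act y) = card (supp act x0)"
    using card_supp_orbit[OF assms(1)] orbit by blast+
  obtain \<sigma> where "\<sigma> \<in> fixing A" "y = act \<sigma> x"
    using orbit orbit_eq_if_mem[OF act orbit(1)] unfolding orbit_def by blast
  moreover have "(c < supp_nth act x j \<longleftrightarrow> c < supp_nth act y j) \<and>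
      (c = supp_nth act x j \<longleftrightarrow> c = supp_nth act y j)"
    if "j < card (supp act x)" "c \<in> C" for j c
  proof -
    have "x \<in> coord_set R j c \<longleftrightarrow> y \<in> coord_set R j c" if "R \<in> coord_rels" for R
      using mem_coord_set_if_mem_cell[OF assms(3) that] mem_coord_set_if_mem_cell[OF assms(4) that]
        \<open>j < card (supp act x)\<close> \<open>c \<in> C\<close> card by simp
    then show ?thesis
      using X card \<open>j < card (supp act x)\<close> by (simp add: coord_set_def coord_rels_def)
  qed
  ultimately show ?thesis
    using orbit_if_same_position[OF act fixing_qaut fin_supp_X[OF X(1)] _ assms(2)] by blast
qed

lemma stone_subset_if_same_profile:
  assumes "U \<in> stone act X" "U' \<in> stone act X" "orbit act A ` X \<inter> U \<subseteq> U'"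
    and "\<And>R j. R \<in> coord_rels \<Longrightarrow> profile U (R, j) = profile U' (R, j)"
  shows "U \<subseteq> U'"
proof
  fix S assume "S \<in> U"
  have u: "is_ultrafilter_on X (fs_subsets act X) U"
    and u': "is_ultrafilter_on X (fs_subsets act X) U'"
    using assms(1,2) by (simp_all add: stone_def)
  then have "S \<in> fs_subsets act X" using ultrafilter_on_subset \<open>S \<in> U\<close> by blast
  then obtain D where D: "finite D" "supports (set_act act) D S"
    unfolding fs_subsets_def fin_supp_def by blast
  obtain x0 where x0: "x0 \<in> X" "orbit act A x0 \<in> U"
    using stone_contains_orbit[OF assms(1)] by blast
  have "orbit act A x0 \<in> U'" using x0 assms(3) by blast
  define K where "K = cell U x0 D"
  have K: "K \<in> U" "K \<in> U'"
    using cell_mem[OF assms(1) x0(2) D(1)] cell_mem[OF assms(2) \<open>orbit act A x0 \<in> U'\<close> D(1)]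
      cell_eq_if_same_profile[OF assms(4)] by (simp_all add: K_def)
  obtain x where x: "x \<in> S" "x \<in> K"
    using ultrafilter_on_disjoint[OF u \<open>S \<in> U\<close> K(1)] by blast
  have "K \<subseteq> S"
  proof
    fix y assume "y \<in> K"
    then obtain g where "g \<in> fixing D" "y = act g x"
      using cell_subset_orbit[OF x0(1) D(1)] x(2) unfolding K_def orbit_def by blast
    then show "y \<in> S"
      using supportsD[OF D(2)] x(1) unfolding set_act_def by blast
  qed
  then show "S \<in> U'"
    using ultrafilter_on_mono[OF u' K(2) \<open>S \<in> fs_subsets act X\<close>] by blast
qed

lemma stone_eq_if_same_profile:
  assumes "U \<in> stone act X" "U' \<in> stone act X" "orbit act A ` X \<inter> U = orbit act A ` X \<inter> U'"
    and "\<And>R j. R \<in> coord_rels \<Longrightarrow> profile U (R, j) = profile U' (R, j)"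
  shows "U = U'"
  using stone_subset_if_same_profile[OF assms(1,2)] stone_subset_if_same_profile[OF assms(2,1)]
    assms(3,4)
  by (metis Int_lower2 inf.absorb_iff2 subset_antisym)

lemma profile_invariant:
  assumes "supports (set_act (set_act act)) B U" "\<pi> \<in> fixing (A \<union> B)" "R \<in> coord_rels"
  shows "\<pi> ` profile U (R, j) = profile U (R, j)"
proof -
  have "\<pi> \<in> fixing A" "\<pi> \<in> fixing B"
    using assms(2) fixing_antimono[of A "A \<union> B"] fixing_antimono[of B "A \<union> B"] by blast+
  then show ?thesis
    using profile_act[OF _ assms(3)] supportsD[OF assms(1)] by metis
qed

lemma profile_shape_setE:
  assumes "U \<in> stone act X" "R \<in> coord_rels"
  obtains s b where "profile U (R, j) = shape_set s b"
proof -
  have u: "is_ultrafilter_on X (fs_subsets act X) U"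
    using assms(1) by (simp add: stone_def)
  obtain B where B: "finite B" "supports (set_act (set_act act)) B U"
    using assms(1) unfolding stone_def fin_supp_def by blast
  consider "R = (<)" | "R = (=)" using assms(2) by (auto simp: coord_rels_def)
  then show ?thesis
  proof cases
    case 1
    have "q' \<in> profile U (R, j)" if "q \<in> profile U (R, j)" "q' \<le> q" for q q'
    proof -
      have "coord_set R j q \<subseteq> coord_set R j q'"
        using 1 that(2) by (auto simp: coord_set_def)
      then show ?thesis
        using that(1) ultrafilter_on_mono[OF u _ coord_set_fs_subset[OF assms(2)]]
        by (simp add: profile_def)
    qed
    moreover have "\<pi> q \<in> profile U (R, j)" if "\<pi> \<in> fixing (A \<union> B)" "q \<in> profile U (R, j)" for \<pi> q
      using profile_invariant[OF B(2) that(1) assms(2)] that(2) by blast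
    ultimately show ?thesis
      using downclosed_invariant_shape[of "A \<union> B"] finite_A B(1) that by blast
  next
    case 2
    have "q = q'" if "q \<in> profile U (R, j)" "q' \<in> profile U (R, j)" for q q'
      using ultrafilter_on_disjoint[OF u] that 2 by (force simp: profile_def coord_set_def)
    then have "profile U (R, j) = {} \<or> (\<exists>b. profile U (R, j) = {b})" by blast
    then show ?thesis
      using that shape_set.simps(1,5) by metis
  qed
qed

lemma profile_beyond_bound:
  assumes "U \<in> stone act X" "supp_bound \<le> j"
  shows "profile U (R, j) = {}"
proof -
  have "coord_set R j q = {}" for q
    using card_supp_less_bound assms(2) by (force simp: coord_set_def)
  then show ?thesis
    using ultrafilter_on_empty[of X "fs_subsets act X" U] assms(1)
    by (simp add: profile_def stone_def)
qed

definition profile_index :: "coord_index set" where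
  "profile_index = coord_rels \<times> {..<supp_bound}"

lemma finite_profile_index: "finite profile_index"
  by (simp add: profile_index_def finite_coord_rels)

definition profile_shape :: "'x set set \<Rightarrow> coord_index \<Rightarrow> shape" where
  "profile_shape U i = fst (shape_repr (profile U i))"

definition profile_point :: "'x set set \<Rightarrow> coord_index \<Rightarrow> rat" where
  "profile_point U i = snd (shape_repr (profile U i))"

lemma profile_eq_shape_set:
  assumes "U \<in> stone act X" "R \<in> coord_rels"
  shows "profile U (R, j) = shape_set (profile_shape U (R, j)) (profile_point U (R, j))"
  using profile_shape_setE[OF assms] shape_set_shape_repr
  unfolding profile_shape_def profile_point_def by metis

definition code :: "'x set set \<Rightarrow> 'x set set \<times> (coord_index \<times> shape) set \<times>
    (coord_index \<times> coord_index) set \<times> (coord_index \<times> rat) set \<times> (coord_index \<times> rat) set" where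
  "code U = (orbit act A ` X \<inter> U, (\<lambda>i. (i, profile_shape U i)) ` profile_index,
     order_type A profile_index (profile_point U))"

lemma finite_codes: "finite (code ` S)"
proof (rule finite_subset)
  show "code ` S \<subseteq> Pow (orbit act A ` X) \<times> Pow (profile_index \<times> (UNIV :: shape set)) \<times>
      order_type A profile_index ` UNIV"
    unfolding code_def by auto
  show "finite (Pow (orbit act A ` X) \<times> Pow (profile_index \<times> (UNIV :: shape set)) \<times>
      order_type A profile_index ` UNIV)"
    using finite_orbits finite_profile_index finite_UNIV_shape finite_order_types[OF finite_A]
    by (intro finite_cartesian_product) simp_all
qed

lemma profile_conj_if_same_shapes:
  assumes "U \<in> stone act X" "U' \<in> stone act X" "\<pi> \<in> fixing A" "R \<in> coord_rels"
    and "\<And>i. i \<in> profile_index \<Longrightarrow> profile_shape U' i = profile_shape U i"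
    and "\<And>i. i \<in> profile_index \<Longrightarrow> profile_point U' i = \<pi> (profile_point U i)"
  shows "profile U' (R, j) = profile (set_act (set_act act) \<pi> U) (R, j)"
proof (cases "j < supp_bound")
  case True
  then have i: "(R, j) \<in> profile_index" using assms(4) by (simp add: profile_index_def)
  have "profile U' (R, j) = shape_set (profile_shape U (R, j)) (\<pi> (profile_point U (R, j)))"
    using profile_eq_shape_set[OF assms(2,4)] assms(5,6)[OF i] by simp
  also have "\<dots> = \<pi> ` profile U (R, j)"
    using profile_eq_shape_set[OF assms(1,4)] qaut_image_shape_set[OF fixing_qaut[OF assms(3)]]
    by simp
  finally show ?thesis using profile_act[OF assms(3,4)] by simp
next
  case False
  then have "supp_bound \<le> j" by simp
  then show ?thesis
    using profile_beyond_bound[OF assms(2)] profile_beyond_bound[OF stone_act[OF assms(3,1)]]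
    by simp
qed

lemma conj_if_same_code:
  assumes "U \<in> stone act X" "U' \<in> stone act X" "code U = code U'"
  obtains \<pi> where "\<pi> \<in> fixing A" "U' = set_act (set_act act) \<pi> U"
proof -
  have orbits: "orbit act A ` X \<inter> U = orbit act A ` X \<inter> U'"
    and shapes: "(\<lambda>i. (i, profile_shape U i)) ` profile_index =
      (\<lambda>i. (i, profile_shape U' i)) ` profile_index"
    and points: "order_type A profile_index (profile_point U) =
      order_type A profile_index (profile_point U')"
    using assms(3) by (simp_all add: code_def)
  obtain \<pi> where \<pi>: "\<pi> \<in> fixing A"
    "\<And>i. i \<in> profile_index \<Longrightarrow> \<pi> (profile_point U i) = profile_point U' i"
    using fixing_if_order_type_eq[OF finite_A finite_profile_index points] by blast
  have "profile_shape U' i = profile_shape U i" if "i \<in> profile_index" for i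
  proof -
    have "(i, profile_shape U i) \<in> (\<lambda>i. (i, profile_shape U' i)) ` profile_index"
      using shapes that by blast
    then show ?thesis by (auto simp: image_iff)
  qed
  then have "profile U' (R, j) = profile (set_act (set_act act) \<pi> U) (R, j)"
    if "R \<in> coord_rels" for R j
    using profile_conj_if_same_shapes[OF assms(1,2) \<pi>(1) that] \<pi>(2) by simp
  moreover have "orbit act A ` X \<inter> U' = orbit act A ` X \<inter> set_act (set_act act) \<pi> U"
    using orbits orbits_act[OF \<pi>(1)] by simp
  ultimately have "U' = set_act (set_act act) \<pi> U"
    using stone_eq_if_same_profile[OF assms(2) stone_act[OF \<pi>(1) assms(1)]] by blast
  then show ?thesis using that \<pi>(1) by blast
qed

lemma finite_stone_orbits: "finite (orbit (set_act (set_act act)) A ` stone act X)"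
proof (rule finite_image_if_factors[OF finite_codes])
  fix U U' assume "U \<in> stone act X" "U' \<in> stone act X" "code U = code U'"
  then obtain \<pi> where "\<pi> \<in> fixing A" "U' = set_act (set_act act) \<pi> U"
    using conj_if_same_code by blast
  then show "orbit (set_act (set_act act)) A U = orbit (set_act (set_act act)) A U'"
    using orbit_act[OF qaction_set_act[OF qaction_set_act[OF act]]] by simp
qed

lemma definable_stone: "definable (set_act (set_act act)) (stone act X)"
  unfolding definable_def using finite_A supports_stone finite_stone_orbits
  by (auto simp: stone_def)

end

theorem mainTheorem12:
  fixes act :: "(rat \<Rightarrow> rat) \<Rightarrow> 'x \<Rightarrow> 'x" and X :: "'x set"
  assumes "is_qaction act"
    and "definable act X"
  shows "definable (set_act (set_act act)) (stone act X)"
proof -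
  obtain A where "finite A" "supports (set_act act) A X" "\<forall>x\<in>X. fin_supp act x"
    "finite (orbit act A ` X)"
    using assms(2) unfolding definable_def by blast
  then interpret definable_over act A X
    using assms(1) by unfold_locales auto
  show ?thesis by (rule definable_stone)
qed

end
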